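(* Let $1<n\leq m$ and let $v\in Z_{n,m}$ with $h(v)\geq h_{n,m}$ and $\sum_{i\in I_c(v)}v_i=0$. Then $d(v,0)\leq D_{n,m}$.
   Context: Elements of $\mathbb{Z}_n$ are identified with representatives in $\{0,\dots,n-1\}$ (so $v_0,v_{m+1}$ are such integers in sums). $Z_{n,m}$ has vertices $u=(u_0,\dots,u_{m+1})\in\mathbb{Z}_n\times\{-1,0,1\}^m\times\mathbb{Z}_n$ with $\sum u_i\equiv0\pmod n$; $u,v$ adjacent if there is $0\leq i\leq m$ with $u_j=v_j$ for $j\notin\{i,i+1\}$ and either ($u_i=v_i+1$, $u_{i+1}=v_{i+1}-1$) or ($u_i=v_i-1$, $u_{i+1}=v_{i+1}+1$), arithmetic in coordinates $0,m+1$ in $\mathbb{Z}_n$. $d$ is graph distance, $0$ the all-zero vertex. $\operatorname{Piv}(v)$ is the set of $-1\le p\le m+1$ with $n\mid\sum_{i=0}^pv_i$. $p_l(v)=\max\{p\in\operatorname{Piv}(v):p<\frac m2\}$, $p_r(v)=\min\{p\in\operatorname{Piv}(v):p\ge\frac m2\}$, $I_c(v)=\{p_l(v)+1,\dots,p_r(v)\}$, $h(v)=\min\{|p-\frac m2|:p\in\operatorname{Piv}(v)\}$, $h_{n,m}=\frac n2$ if $2\mid(m-n)$ and $\frac{n+1}2$ otherwise. $u^{(0)}$: $u_i=1$ ($1\le i\le m$), $u_0\equiv-\lfloor\frac{m-n}2\rfloor\pmod n$; for $n<m$, $m-n$ odd, $u^{(1)}$: $u_{\lceil(m+1)/2\rceil}=0$,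 other $u_i=1$ ($1\le i\le m$), $u_0\equiv-\lfloor\frac{m-n}2\rfloor\pmod n$. $D_{n,m}=d(u^{(0)},0)$ if $2\mid(m-n)$, else $\max\{d(u^{(0)},0),d(u^{(1)},0)\}$. *)

theory Defs
  imports Complex_Main "HOL-Library.Extended_Nat"
begin

text \<open>Vertices of Z_{n,m} are represented as functions v :: nat => int with
  v 0, v (m+1) in {0..n-1} (representatives of Z_n), v i in {-1,0,1} for 1 <= i <= m,
  v i = 0 for i > m+1 (canonical padding), and n dividing the sum of all entries.\<close>

definition Zvert :: "nat \<Rightarrow> nat \<Rightarrow> (nat \<Rightarrow> int) \<Rightarrow> bool" where
  "Zvert n m v \<longleftrightarrow>
     v 0 \<in> {0..<int n} \<and> v (m+1) \<in> {0..<int n} \<and>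
     (\<forall>i. 1 \<le> i \<and> i \<le> m \<longrightarrow> v i \<in> {-1,0,1}) \<and>
     (\<forall>i>m+1. v i = 0) \<and>
     int n dvd (\<Sum>i\<le>m+1. v i)"

definition cadd :: "nat \<Rightarrow> nat \<Rightarrow> nat \<Rightarrow> int \<Rightarrow> int \<Rightarrow> int" where
  "cadd n m k x y = (if k = 0 \<or> k = m+1 then (x + y) mod int n else x + y)"

definition Zadj :: "nat \<Rightarrow> nat \<Rightarrow> (nat \<Rightarrow> int) \<Rightarrow> (nat \<Rightarrow> int) \<Rightarrow> bool" where
  "Zadj n m u v \<longleftrightarrow> Zvert n m u \<and> Zvert n m v \<and>
     (\<exists>i\<le>m. (\<forall>j. j \<noteq> i \<and> j \<noteq> i+1 \<longrightarrow> u j = v j) \<and>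
        ((u i = cadd n m i (v i) 1 \<and> u (i+1) = cadd n m (i+1) (v (i+1)) (-1)) \<or>
         (u i = cadd n m i (v i) (-1) \<and> u (i+1) = cadd n m (i+1) (v (i+1)) 1)))"

text \<open>Graph distance (infinity if not connected).\<close>
definition Zdist :: "nat \<Rightarrow> nat \<Rightarrow> (nat \<Rightarrow> int) \<Rightarrow> (nat \<Rightarrow> int) \<Rightarrow> enat" where
  "Zdist n m u v = (INF k \<in> {k. (Zadj n m ^^ k) u v}. enat k)"

definition Zzero :: "nat \<Rightarrow> int" where
  "Zzero = (\<lambda>_. 0)"

definition Piv :: "nat \<Rightarrow> nat \<Rightarrow> (nat \<Rightarrow> int) \<Rightarrow> int set" where
  "Piv n m v = {p. -1 \<le> p \<and> p \<le> int m + 1 \<and> int n dvd (\<Sum>i\<in>{0..p}. v (nat i))}"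

definition p_l :: "nat \<Rightarrow> nat \<Rightarrow> (nat \<Rightarrow> int) \<Rightarrow> int" where
  "p_l n m v = Max {p \<in> Piv n m v. real_of_int p < real m / 2}"

definition p_r :: "nat \<Rightarrow> nat \<Rightarrow> (nat \<Rightarrow> int) \<Rightarrow> int" where
  "p_r n m v = Min {p \<in> Piv n m v. real_of_int p \<ge> real m / 2}"

definition I_c :: "nat \<Rightarrow> nat \<Rightarrow> (nat \<Rightarrow> int) \<Rightarrow> int set" where
  "I_c n m v = {p_l n m v + 1 .. p_r n m v}"

definition hpiv :: "nat \<Rightarrow> nat \<Rightarrow> (nat \<Rightarrow> int) \<Rightarrow> real" where
  "hpiv n m v = Min ((\<lambda>p. \<bar>real_of_int p - real m / 2\<bar>) ` Piv n m v)"

definition h_nm :: "nat \<Rightarrow> nat \<Rightarrow> real" where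
  "h_nm n m = (if even (int m - int n) then real n / 2 else (real n + 1) / 2)"

text \<open>u^(0); the last coordinate is the unique one making it a vertex.\<close>
definition u0 :: "nat \<Rightarrow> nat \<Rightarrow> nat \<Rightarrow> int" where
  "u0 n m = (let a = (- \<lfloor>(real m - real n) / 2\<rfloor>) mod int n in
     (\<lambda>i. if i = 0 then a else if i \<le> m then 1
          else if i = m+1 then (- (a + int m)) mod int n else 0))"

definition u1 :: "nat \<Rightarrow> nat \<Rightarrow> nat \<Rightarrow> int" where
  "u1 n m = (let a = (- \<lfloor>(real m - real n) / 2\<rfloor>) mod int n;
                 c = nat \<lceil>(real m + 1) / 2\<rceil> in
     (\<lambda>i. if i = 0 then a else if i = c then 0 else if i \<le> m then 1
          else if i = m+1 then (- (a + int m - 1)) mod int n else 0))"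

definition D_nm :: "nat \<Rightarrow> nat \<Rightarrow> enat" where
  "D_nm n m = (if even (int m - int n) then Zdist n m (u0 n m) Zzero
               else max (Zdist n m (u0 n m) Zzero) (Zdist n m (u1 n m) Zzero))"

end

theory Submission
  imports Defs
begin

text \<open>Write S(j) = v_0 + ... + v_j for the partial sums of a vertex v. A move along an edge
  changes one partial sum S(i), i <= m, by +1 or -1 and shifts all of them by a common multiple of n;
  conversely, moving at an extremal partial sum, on the side away from c, decreases
  sum_{j<=m} |S(j) - c| by one. Hence d(v,0) is the minimum of this cost over the multiples c of n.

  Let e be 0 or 1 according to the parity of m - n, and L = (m-n-e)/2, R = (m+n+e)/2.
  The hypothesis h(v) >= h_{n,m} says that no S(i) with L < i < R is divisible by n, so on [L,R]
  the partial sums stay between two consecutive multiples b and b + n, while outside they are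
  1-Lipschitz. This bounds the sum of the costs at b and b + n by sum_i max(n, |2i - m| - e),
  whereas twice the cost of u^(0) (resp. u^(1)) at any multiple of n is at least that sum.\<close>

definition psum :: "(nat \<Rightarrow> int) \<Rightarrow> nat \<Rightarrow> int" where
  "psum v i = (\<Sum>j\<le>i. v j)"

definition cost :: "nat \<Rightarrow> (nat \<Rightarrow> int) \<Rightarrow> int \<Rightarrow> int" where
  "cost m v c = (\<Sum>i\<le>m. \<bar>psum v i - c\<bar>)"

lemma psum_0 [simp]: "psum v 0 = v 0"
  by (simp add: psum_def)

lemma psum_Suc: "psum v (Suc i) = psum v i + v (Suc i)"
  by (simp add: psum_def)

lemma sum_atLeastAtMost_int_eq_psum: "(\<Sum>l\<in>{0..int i}. v (nat l)) = psum v i"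
  unfolding psum_def by (rule sum.reindex_bij_witness[where i=int and j=nat]) auto

lemma cost_nonneg: "0 \<le> cost m v c"
  unfolding cost_def by (intro sum_nonneg) auto

lemma twice_cost_eq_sum_pairs:
  "2 * cost m v c = (\<Sum>i\<le>m. \<bar>psum v i - c\<bar> + \<bar>psum v (m - i) - c\<bar>)"
proof -
  have "(\<Sum>i\<le>m. \<bar>psum v (m - i) - c\<bar>) = cost m v c"
    unfolding cost_def by (rule sum.reindex_bij_witness[where i="\<lambda>i. m - i" and j="\<lambda>i. m - i"]) auto
  then show ?thesis by (simp add: sum.distrib cost_def)
qed

lemma sum_fun_upd: "finite A \<Longrightarrow> k \<in> A \<Longrightarrow> sum (f(k := x)) A = sum f A - f k + (x::int)"
  by (simp add: sum.remove[of A k] sum.cong[of "A - {k}" "A - {k}" "f(k := x)" f])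

lemma Zvert_D:
  assumes "Zvert n m v"
  shows "v 0 \<in> {0..<int n}" "v (m+1) \<in> {0..<int n}"
    "\<And>j. 1 \<le> j \<Longrightarrow> j \<le> m \<Longrightarrow> v j \<in> {-1,0,1}"
    "\<And>j. j > m+1 \<Longrightarrow> v j = 0" "int n dvd (\<Sum>j\<le>m+1. v j)"
  using assms unfolding Zvert_def by auto

lemma dvd_cadd_diff: "int n dvd cadd n m k x d - (x + d)"
  unfolding cadd_def by (simp add: mod_eq_dvd_iff[symmetric] dvd_diff_commute)

lemma cadd_cadd_uminus:
  assumes "k = 0 \<or> k = m+1 \<longrightarrow> x \<in> {0..<int n}"
  shows "cadd n m k (cadd n m k x d) (-d) = x"
  using assms unfolding cadd_def by (auto simp: mod_diff_left_eq)

lemma int_dvd_in_range_eq_0: "int n dvd (x::int) \<Longrightarrow> 0 \<le> x \<Longrightarrow> x < int n \<Longrightarrow> x = 0"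
  using zdvd_not_zless[of x "int n"] by (cases "x = 0") auto

subsection \<open>Distance to zero as a minimal cost\<close>

lemma psum_after_move:
  assumes "i \<le> m"
    and same: "\<forall>j. j \<noteq> i \<and> j \<noteq> i+1 \<longrightarrow> u j = w j"
    and ui: "u i = cadd n m i (w i) d" and ui1: "u (i+1) = cadd n m (i+1) (w (i+1)) (-d)"
  obtains t where "int n dvd t" "\<And>j. j \<le> m \<Longrightarrow> psum u j = psum w j + (if j = i then d else 0) + t"
proof -
  define t where "t = u 0 - w 0 - (if i = 0 then d else 0)"
  have "int n dvd t"
    using dvd_cadd_diff[of n m 0 "w 0" d] ui same by (cases "i = 0") (auto simp: t_def diff_diff_eq)
  moreover have "psum u j = psum w j + (if j = i then d else 0) + t" if "j \<le> m" for j
    using that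
  proof (induction j)
    case 0
    then show ?case using same ui by (cases "i = 0") (auto simp: t_def)
  next
    case (Suc j)
    have "u (Suc j) = w (Suc j) + (if Suc j = i then d else 0) - (if j = i then d else 0)"
      using ui ui1 same \<open>i \<le> m\<close> Suc.prems unfolding cadd_def by (cases "Suc j = i"; cases "j = i") auto
    then show ?case using Suc by (simp add: psum_Suc)
  qed
  ultimately show ?thesis using that by blast
qed

definition move :: "nat \<Rightarrow> nat \<Rightarrow> (nat \<Rightarrow> int) \<Rightarrow> nat \<Rightarrow> int \<Rightarrow> nat \<Rightarrow> int" where
  "move n m v i d = v(i := cadd n m i (v i) d, Suc i := cadd n m (Suc i) (v (Suc i)) (-d))"

locale legal_move =
  fixes n m :: nat and v :: "nat \<Rightarrow> int" and i :: nat and d :: int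
  assumes n_pos: "0 < n" and i_le: "i \<le> m" and vert: "Zvert n m v" and d_unit: "d = 1 \<or> d = -1"
    and left_ok: "1 \<le> i \<longrightarrow> v i + d \<in> {-1,0,1}"
    and right_ok: "Suc i \<le> m \<longrightarrow> v (Suc i) - d \<in> {-1,0,1}"
begin

lemma Zvert_move: "Zvert n m (move n m v i d)"
proof -
  let ?w = "move n m v i d"
  note V = Zvert_D[OF vert]
  have sum_w: "(\<Sum>j\<le>m+1. ?w j) = (\<Sum>j\<le>m+1. v j)
      + (cadd n m i (v i) d - (v i + d)) + (cadd n m (Suc i) (v (Suc i)) (-d) - (v (Suc i) - d))"
  proof -
    have "(\<Sum>j\<le>m+1. ?w j)
        = sum (v(i := cadd n m i (v i) d)) {..m+1} - v (Suc i) + cadd n m (Suc i) (v (Suc i)) (-d)"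
      unfolding move_def using i_le by (subst sum_fun_upd) auto
    also have "sum (v(i := cadd n m i (v i) d)) {..m+1} = (\<Sum>j\<le>m+1. v j) - v i + cadd n m i (v i) d"
      using i_le by (intro sum_fun_upd) auto
    finally show ?thesis by linarith
  qed
  have "int n dvd cadd n m (Suc i) (v (Suc i)) (-d) - (v (Suc i) - d)"
    using dvd_cadd_diff[of n m "Suc i" "v (Suc i)" "-d"] by simp
  then have "int n dvd (\<Sum>j\<le>m+1. ?w j)"
    unfolding sum_w by (rule dvd_add[OF dvd_add[OF V(5) dvd_cadd_diff]])
  moreover have "\<forall>j. 1 \<le> j \<and> j \<le> m \<longrightarrow> ?w j \<in> {-1,0,1}"
    using left_ok right_ok V(3) unfolding move_def cadd_def by auto
  moreover have "?w 0 \<in> {0..<int n}" "?w (m+1) \<in> {0..<int n}" "\<forall>j>m+1. ?w j = 0"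
    using V(1,2,4) n_pos i_le unfolding move_def cadd_def by auto
  ultimately show ?thesis unfolding Zvert_def by blast
qed

lemma Zadj_move: "Zadj n m v (move n m v i d)"
proof -
  have "v i = cadd n m i (move n m v i d i) (-d)"
    using cadd_cadd_uminus[of i m "v i" n d] Zvert_D(1,2)[OF vert] i_le by (auto simp: move_def)
  moreover have "v (i+1) = cadd n m (i+1) (move n m v i d (i+1)) d"
    using cadd_cadd_uminus[of "i+1" m "v (i+1)" n "-d"] Zvert_D(1,2)[OF vert] i_le by (auto simp: move_def)
  ultimately show ?thesis
    unfolding Zadj_def using vert Zvert_move i_le d_unit by (auto simp: move_def intro!: exI[of _ i])
qed

lemma psum_move:
  obtains t where "int n dvd t"
    "\<And>j. j \<le> m \<Longrightarrow> psum (move n m v i d) j = psum v j + (if j = i then d else 0) + t"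
proof -
  have "\<forall>j. j \<noteq> i \<and> j \<noteq> i+1 \<longrightarrow> move n m v i d j = v j"
    "move n m v i d i = cadd n m i (v i) d"
    "move n m v i d (i+1) = cadd n m (i+1) (v (i+1)) (-d)"
    by (auto simp: move_def)
  then show ?thesis using that by (blast intro: psum_after_move[OF i_le])
qed

end

lemma cost_after_psum_shift:
  assumes "i \<le> m" and "\<And>j. j \<le> m \<Longrightarrow> psum u j = psum w j + (if j = i then d else 0) + t"
  shows "cost m u (c + t) = cost m w c - \<bar>psum w i - c\<bar> + \<bar>psum w i + d - c\<bar>"
proof -
  have "cost m u (c + t) = (\<Sum>j\<le>m. \<bar>psum w j - c\<bar>
      + (if j = i then \<bar>psum w i + d - c\<bar> - \<bar>psum w i - c\<bar> else 0))"
    unfolding cost_def using assms(2) by (intro sum.cong) auto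
  then show ?thesis using assms(1) by (simp add: sum.distrib cost_def)
qed

lemma cost_eq_0_imp_Zzero:
  assumes V: "Zvert n m v" and "int n dvd c" and "cost m v c = 0"
  shows "v = Zzero"
proof -
  have psum_c: "psum v j = c" if "j \<le> m" for j
    using assms(3) that unfolding cost_def by (subst (asm) sum_nonneg_eq_0_iff) auto
  note F = Zvert_D[OF V]
  have c0: "c = 0" using psum_c[of 0] F(1) assms(2) int_dvd_in_range_eq_0[of n c] by auto
  have "(\<Sum>j\<le>m+1. v j) = psum v m + v (m+1)" by (simp add: psum_def)
  then have last: "v (m+1) = 0"
    using F(2,5) psum_c[of m] c0 int_dvd_in_range_eq_0[of n "v (m+1)"] by simp
  show ?thesis
  proof
    fix j
    show "v j = Zzero j"
    proof (cases j)
      case 0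
      then show ?thesis using psum_c[of 0] c0 by (simp add: Zzero_def)
    next
      case (Suc k)
      then consider "j \<le> m" | "j = m+1" | "m+1 < j" by linarith
      then show ?thesis
        using psum_c[of k] psum_c[of j] psum_Suc[of v k] c0 last F(4) Suc by cases (auto simp: Zzero_def)
    qed
  qed
qed

lemma legal_move_at_extremum:
  assumes V: "Zvert n m v" and "i \<le> m" and d: "d = 1 \<or> d = -1"
    and ext: "\<And>j. j \<le> m \<Longrightarrow> d * psum v i \<le> d * psum v j"
  shows "1 \<le> i \<longrightarrow> v i + d \<in> {-1,0,1}" and "Suc i \<le> m \<longrightarrow> v (Suc i) - d \<in> {-1,0,1}"
proof -
  show "1 \<le> i \<longrightarrow> v i + d \<in> {-1,0,1}"
  proof
    assume "1 \<le> i"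
    then have "v i = psum v i - psum v (i - 1)" by (cases i) (auto simp: psum_Suc)
    moreover have "i - 1 \<le> m" using \<open>i \<le> m\<close> by simp
    ultimately show "v i + d \<in> {-1,0,1}"
      using Zvert_D(3)[OF V, of i] ext[of "i - 1"] d \<open>1 \<le> i\<close> \<open>i \<le> m\<close> by auto
  qed
  show "Suc i \<le> m \<longrightarrow> v (Suc i) - d \<in> {-1,0,1}"
    using Zvert_D(3)[OF V, of "Suc i"] ext[of "Suc i"] psum_Suc[of v i] d by auto
qed

lemma improving_move_exists:
  assumes V: "Zvert n m v" and pos: "0 < cost m v c"
  obtains i d where "i \<le> m" "d = 1 \<or> d = -1" "1 \<le> i \<longrightarrow> v i + d \<in> {-1,0,1}"
    "Suc i \<le> m \<longrightarrow> v (Suc i) - d \<in> {-1,0,1}" "d * (psum v i - c) < 0"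
proof -
  define d :: int where "d = (if \<exists>j\<le>m. c < psum v j then -1 else 1)"
  have d: "d = 1 \<or> d = -1" by (simp add: d_def)
  have "\<exists>j\<le>m. psum v j \<noteq> c"
  proof (rule ccontr)
    assume "\<not> ?thesis"
    then have "cost m v c = 0" by (simp add: cost_def)
    with pos show False by simp
  qed
  then obtain j where j: "j \<le> m" "d * (psum v j - c) < 0"
    by (cases "\<exists>j\<le>m. c < psum v j") (auto simp: d_def neq_iff)
  define f where "f k = d * psum v k" for k
  define i where "i = arg_min_on f {..m}"
  have i: "i \<le> m" using arg_min_if_finite(1)[where S="{..m}" and f=f] by (simp add: i_def)
  have ext: "d * psum v i \<le> d * psum v k" if "k \<le> m" for k
    using arg_min_least[where S="{..m}" and f=f and y=k] that by (simp add: i_def f_def)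
  have "d * (psum v i - c) < 0" using ext[OF j(1)] j(2) by (simp add: algebra_simps)
  with i d legal_move_at_extremum[OF V i d ext] show ?thesis by (rule that)
qed

lemma relpowp_Zadj_Zzero_if_cost:
  assumes "1 < n" and "Zvert n m v" "int n dvd c" "cost m v c = int N"
  shows "(Zadj n m ^^ N) v Zzero"
  using assms(2-)
proof (induction N arbitrary: v c)
  case 0
  then show ?case using cost_eq_0_imp_Zzero[of n m v c] by simp
next
  case (Suc N)
  have "0 < cost m v c" using Suc.prems(3) by simp
  then obtain i d where i: "i \<le> m" "d = 1 \<or> d = -1" "1 \<le> i \<longrightarrow> v i + d \<in> {-1,0,1}"
    "Suc i \<le> m \<longrightarrow> v (Suc i) - d \<in> {-1,0,1}" and closer: "d * (psum v i - c) < 0"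
    using improving_move_exists[OF Suc.prems(1)] by blast
  interpret legal_move n m v i d
    unfolding legal_move_def using assms(1) i Suc.prems(1) by auto
  obtain t where t: "int n dvd t"
    "\<And>j. j \<le> m \<Longrightarrow> psum (move n m v i d) j = psum v j + (if j = i then d else 0) + t"
    using psum_move by blast
  have "cost m (move n m v i d) (c + t) = int N"
    using cost_after_psum_shift[OF i(1) t(2)] Suc.prems(3) closer i(2) by (auto simp: abs_if)
  then have "(Zadj n m ^^ N) (move n m v i d) Zzero"
    by (rule Suc.IH[OF Zvert_move dvd_add[OF Suc.prems(2) t(1)]])
  then show ?case using Zadj_move by (intro relpowp_Suc_I2[where P="Zadj n m"])
qed

lemma cost_le_if_relpowp_Zadj_Zzero:
  "(Zadj n m ^^ L) u Zzero \<Longrightarrow> \<exists>c. int n dvd c \<and> cost m u c \<le> int L"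
proof (induction L arbitrary: u)
  case 0
  have "cost m Zzero 0 = 0" by (simp add: cost_def psum_def Zzero_def)
  then show ?case using 0 by (auto intro!: exI[of _ 0])
next
  case (Suc L)
  obtain w where uw: "Zadj n m u w" and wz: "(Zadj n m ^^ L) w Zzero"
    using Suc.prems by (metis relpowp_Suc_D2)
  obtain c where c: "int n dvd c" "cost m w c \<le> int L" using Suc.IH[OF wz] by blast
  obtain i where i: "i \<le> m" "\<forall>j. j \<noteq> i \<and> j \<noteq> i+1 \<longrightarrow> u j = w j"
    and cs: "(u i = cadd n m i (w i) 1 \<and> u (i+1) = cadd n m (i+1) (w (i+1)) (-1)) \<or>
      (u i = cadd n m i (w i) (-1) \<and> u (i+1) = cadd n m (i+1) (w (i+1)) 1)"
    using uw unfolding Zadj_def by blast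
  obtain d where d: "d = 1 \<or> d = -1"
    and ui: "u i = cadd n m i (w i) d" "u (i+1) = cadd n m (i+1) (w (i+1)) (-d)"
    using cs by (metis minus_minus)
  obtain t where t: "int n dvd t"
    "\<And>j. j \<le> m \<Longrightarrow> psum u j = psum w j + (if j = i then d else 0) + t"
    using psum_after_move[OF i ui] by blast
  have "cost m u (c + t) \<le> cost m w c + 1"
    using cost_after_psum_shift[OF i(1) t(2)] d by (auto simp: abs_if)
  then show ?case using c t(1) by (intro exI[of _ "c + t"]) auto
qed

lemma Zdist_Zzero_le_if_cost_le:
  assumes "1 < n" and "Zvert n m v" and "int n dvd b"
    and le: "\<And>c. int n dvd c \<Longrightarrow> cost m v b \<le> cost m u c"
  shows "Zdist n m v Zzero \<le> Zdist n m u Zzero"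
  unfolding Zdist_def
proof (rule INF_greatest)
  fix k assume "k \<in> {k. (Zadj n m ^^ k) u Zzero}"
  then obtain c where c: "int n dvd c" "cost m u c \<le> int k"
    using cost_le_if_relpowp_Zadj_Zzero by blast
  define N where "N = nat (cost m v b)"
  have N: "cost m v b = int N" unfolding N_def using cost_nonneg by simp
  have "(Zadj n m ^^ N) v Zzero" using relpowp_Zadj_Zzero_if_cost[OF assms(1-3) N] .
  then have "(INF k \<in> {k. (Zadj n m ^^ k) v Zzero}. enat k) \<le> enat N" by (intro INF_lower2[of N]) auto
  also have "enat N \<le> enat k" using N le[OF c(1)] c(2) by simp
  finally show "(INF k \<in> {k. (Zadj n m ^^ k) v Zzero}. enat k) \<le> enat k" .
qed

subsection \<open>Vertices without pivots near the middle\<close>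

lemma psum_lipschitz:
  assumes V: "Zvert n m v" and "i \<le> j" "j \<le> m"
  shows "\<bar>psum v j - psum v i\<bar> \<le> int j - int i"
  using assms(2,3)
proof (induction j rule: dec_induct)
  case base
  then show ?case by simp
next
  case (step k)
  have "v (Suc k) \<in> {-1,0,1}" using Zvert_D(3)[OF V, of "Suc k"] step.prems by simp
  then show ?case using step.IH step.prems psum_Suc[of v k] by auto
qed

lemma not_dvd_psum_near_middle:
  assumes "hpiv n m v \<ge> h_nm n m" and "i \<le> m" and "\<bar>real i - real m / 2\<bar> < h_nm n m"
  shows "\<not> int n dvd psum v i"
proof
  assume "int n dvd psum v i"
  then have "int i \<in> Piv n m v"
    unfolding Piv_def using assms(2) by (simp add: sum_atLeastAtMost_int_eq_psum)
  moreover have "finite (Piv n m v)"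
    by (rule finite_subset[of _ "{-1..int m + 1}"]) (auto simp: Piv_def)
  ultimately have "hpiv n m v \<le> \<bar>real_of_int (int i) - real m / 2\<bar>"
    unfolding hpiv_def by (intro Min_le) (auto intro!: rev_image_eqI[where x="int i"])
  then show False using assms(1,3) by simp
qed

text \<open>Partial sums move by at most one per step, so they cannot jump over a multiple of n.\<close>

lemma psum_band:
  assumes V: "Zvert n m v" and "0 < n" and LR: "L + 2 \<le> R" "R \<le> m"
    and np: "\<And>i. L < i \<Longrightarrow> i < R \<Longrightarrow> \<not> int n dvd psum v i"
  obtains b where "int n dvd b" "\<And>i. L \<le> i \<Longrightarrow> i \<le> R \<Longrightarrow> b \<le> psum v i \<and> psum v i \<le> b + int n"
proof -
  define b where "b = psum v (L+1) - psum v (L+1) mod int n"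
  have bd: "int n dvd b" unfolding b_def by simp
  have unit_step: "psum v j - 1 \<le> psum v (Suc j) \<and> psum v (Suc j) \<le> psum v j + 1" if "j < m" for j
    using Zvert_D(3)[OF V, of "Suc j"] that psum_Suc[of v j] by auto
  have inner: "b < psum v i \<and> psum v i < b + int n" if "L + 1 \<le> i" "i < R" for i
    using that
  proof (induction i rule: dec_induct)
    case base
    have "0 \<le> psum v (L+1) mod int n" "psum v (L+1) mod int n < int n" using \<open>0 < n\<close> by simp_all
    moreover have "psum v (L+1) mod int n \<noteq> 0" using np[of "L+1"] LR by (simp add: dvd_eq_mod_eq_0)
    ultimately show ?case unfolding b_def by linarith
  next
    case (step k)
    have "b < psum v k \<and> psum v k < b + int n" using step.IH step.prems by simp
    moreover have "psum v (Suc k) \<noteq> b" "psum v (Suc k) \<noteq> b + int n"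
      using np[of "Suc k"] step.hyps step.prems bd by auto
    moreover have "k < m" using step.prems LR by simp
    ultimately show ?case using unit_step[of k] by linarith
  qed
  have "b \<le> psum v i \<and> psum v i \<le> b + int n" if "L \<le> i" "i \<le> R" for i
  proof -
    obtain r where r: "R = Suc r" using LR by (cases R) auto
    have "b \<le> psum v L \<and> psum v L \<le> b + int n" using inner[of "L+1"] unit_step[of L] LR by simp
    moreover have "b \<le> psum v R \<and> psum v R \<le> b + int n" using inner[of r] unit_step[of r] LR r by simp
    ultimately show ?thesis using that inner[of i] by (cases "i = L"; cases "i = R"; auto)
  qed
  with bd show ?thesis by (rule that)
qed

lemma abs_band_sum_le_max:
  fixes x y b N D r :: int
  assumes "b \<le> y" "y \<le> b + N" "\<bar>x - y\<bar> \<le> r" "N + 2 * r \<le> max N D" "0 \<le> r" "0 \<le> N"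
  shows "\<bar>x - b\<bar> + \<bar>x - b - N\<bar> \<le> max N D"
proof -
  have "\<bar>x - b\<bar> + \<bar>x - b - N\<bar> \<le> N + 2 * r" using assms(1-3,5,6) by (auto simp: abs_if)
  then show ?thesis using assms(4) by linarith
qed

lemma cost_band_sum_le:
  assumes V: "Zvert n m v" and band: "\<And>i. L \<le> i \<Longrightarrow> i \<le> R \<Longrightarrow> b \<le> psum v i \<and> psum v i \<le> b + int n"
    and LR: "L \<le> R" "R \<le> m" and eL: "2 * int L = int m - int n - e" and eR: "2 * int R = int m + int n + e"
    and "0 \<le> e"
  shows "cost m v b + cost m v (b + int n) \<le> (\<Sum>i\<le>m. max (int n) (\<bar>2 * int i - int m\<bar> - e))"
proof -
  have "cost m v b + cost m v (b + int n) = (\<Sum>i\<le>m. \<bar>psum v i - b\<bar> + \<bar>psum v i - b - int n\<bar>)"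
    unfolding cost_def by (simp add: sum.distrib algebra_simps)
  also have "\<dots> \<le> (\<Sum>i\<le>m. max (int n) (\<bar>2 * int i - int m\<bar> - e))"
  proof (rule sum_mono)
    fix i assume i: "i \<in> {..m}"
    consider "i < L" | "L \<le> i" "i \<le> R" | "R < i" by linarith
    then show "\<bar>psum v i - b\<bar> + \<bar>psum v i - b - int n\<bar> \<le> max (int n) (\<bar>2 * int i - int m\<bar> - e)"
    proof cases
      case 1
      have l: "\<bar>psum v L - psum v i\<bar> \<le> int L - int i" using psum_lipschitz[OF V, of i L] 1 LR by auto
      show ?thesis
        by (rule abs_band_sum_le_max[where y="psum v L" and r="int L - int i"])
           (use band[of L] LR l 1 eL in \<open>auto simp: abs_minus_commute\<close>)
    next
      case 2
      then show ?thesis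
        by (intro abs_band_sum_le_max[where y="psum v i" and r=0]) (use band[of i] in auto)
    next
      case 3
      have l: "\<bar>psum v i - psum v R\<bar> \<le> int i - int R" using psum_lipschitz[OF V, of R i] 3 i by auto
      show ?thesis
        by (rule abs_band_sum_le_max[where y="psum v R" and r="int i - int R"])
           (use band[of R] LR l 3 eR in auto)
    qed
  qed
  finally show ?thesis .
qed

lemma not_dvd_psum_in_window:
  assumes "hpiv n m v \<ge> h_nm n m" and h: "h_nm n m = (real n + real_of_int e) / 2"
    and L: "2 * int L = int m - int n - e" and R: "2 * int R = int m + int n + e"
    and "L < i" "i < R" "R \<le> m"
  shows "\<not> int n dvd psum v i"
proof (rule not_dvd_psum_near_middle[OF assms(1)])
  have "\<bar>2 * int i - int m\<bar> \<le> int n + e - 2" using assms(5,6) L R by auto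
  then have "\<bar>real_of_int (2 * int i - int m)\<bar> \<le> real_of_int (int n + e - 2)"
    by (simp only: of_int_abs[symmetric] of_int_le_iff)
  then have "\<bar>2 * real i - real m\<bar> \<le> real n + real_of_int e - 2" by simp
  then show "\<bar>real i - real m / 2\<bar> < h_nm n m" unfolding h by (auto simp: abs_if split: if_splits)
qed (use assms(6,7) in simp)

lemma twice_cost_le_if_high_pivots:
  assumes n: "1 < n" and nm: "n \<le> m" and V: "Zvert n m v" and H: "hpiv n m v \<ge> h_nm n m"
  obtains b where "int n dvd b"
    "2 * cost m v b \<le> (\<Sum>i\<le>m. max (int n) (\<bar>2 * int i - int m\<bar> - of_bool (odd (int m - int n))))"
proof -
  define e :: int where "e = of_bool (odd (int m - int n))"
  define L where "L = nat ((int m - int n - e) div 2)"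
  define R where "R = L + n + nat e"
  have e01: "e = 0 \<or> e = 1" unfolding e_def by (cases "odd (int m - int n)") simp_all
  have e_le: "int n + e \<le> int m"
  proof (cases "m = n")
    case True
    then show ?thesis by (simp add: e_def)
  next
    case False
    then show ?thesis using nm e01 by auto
  qed
  have "even (int m - int n - e)" by (cases "even (int m - int n)") (simp_all add: e_def)
  then have L: "2 * int L = int m - int n - e" unfolding L_def using e_le by auto
  have R: "2 * int R = int m + int n + e" unfolding R_def using L e01 by auto
  have LR: "L + 2 \<le> R" "R \<le> m" using n R L e01 e_le unfolding R_def by auto
  have hn: "h_nm n m = (real n + real_of_int e) / 2" by (simp add: h_nm_def e_def)
  have np: "\<not> int n dvd psum v i" if "L < i" "i < R" for i
    using not_dvd_psum_in_window[OF H hn L R that LR(2)] .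
  have "0 < n" using n by simp
  then obtain b where b: "int n dvd b"
    "\<And>i. L \<le> i \<Longrightarrow> i \<le> R \<Longrightarrow> b \<le> psum v i \<and> psum v i \<le> b + int n"
    using psum_band[OF V _ LR np] by blast
  have "L \<le> R" "0 \<le> e" using LR e01 by auto
  from cost_band_sum_le[OF V b(2) this(1) LR(2) L R this(2)]
  have sum: "cost m v b + cost m v (b + int n) \<le> (\<Sum>i\<le>m. max (int n) (\<bar>2 * int i - int m\<bar> - e))" .
  show ?thesis
  proof (cases "cost m v b \<le> cost m v (b + int n)")
    case True
    then have "2 * cost m v b \<le> (\<Sum>i\<le>m. max (int n) (\<bar>2 * int i - int m\<bar> - e))" using sum by simp
    with b(1) show ?thesis unfolding e_def by (rule that)
  next
    case False
    then have "2 * cost m v (b + int n) \<le> (\<Sum>i\<le>m. max (int n) (\<bar>2 * int i - int m\<bar> - e))"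
      using sum by simp
    moreover have "int n dvd b + int n" using b(1) by simp
    ultimately show ?thesis unfolding e_def by (intro that)
  qed
qed

subsection \<open>The extremal vertices u^(0) and u^(1)\<close>

lemma floor_half_diff: "\<lfloor>(real m - real n) / 2\<rfloor> = (int m - int n) div 2"
proof -
  have "(real m - real n) / 2 = real_of_int (int m - int n) / real_of_int 2" by simp
  then show ?thesis by (simp only: floor_divide_of_int_eq)
qed

lemma nat_ceiling_half_Suc: "nat \<lceil>(real m + 1) / 2\<rceil> = (m + 2) div 2"
proof -
  have "\<lceil>(real m + 1) / 2\<rceil> = int ((m + 2) div 2)"
  proof (cases "even m")
    case True
    then obtain r where r: "m = 2 * r" by blast
    show ?thesis by (rule ceiling_unique) (simp_all add: r)
  next
    case False
    then obtain r where r: "m = 2 * r + 1" using oddE by blast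
    have "(m + 2) div 2 = r + 1" using r by simp
    then show ?thesis by (intro ceiling_unique) (simp_all add: r)
  qed
  then show ?thesis by simp
qed

lemma psum_u0:
  "j \<le> m \<Longrightarrow> psum (u0 n m) j = (- ((int m - int n) div 2)) mod int n + int j"
  by (induction j) (simp_all add: psum_Suc u0_def Let_def floor_half_diff)

lemma psum_u1:
  "j \<le> m \<Longrightarrow> psum (u1 n m) j
    = (- ((int m - int n) div 2)) mod int n + int j - (if (m + 2) div 2 \<le> j then 1 else 0)"
  by (induction j) (simp_all add: psum_Suc u1_def Let_def floor_half_diff nat_ceiling_half_Suc)

lemma dvd_mod_uminus_add: "int n dvd (- q) mod int n + q"
proof -
  have "int n dvd (- q) mod int n - (- q)"
    by (simp only: mod_eq_dvd_iff[symmetric] mod_mod_trivial)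
  then show ?thesis by simp
qed

lemma abs_odd_multiple_ge:
  assumes "int n dvd z" shows "int n \<le> \<bar>2 * z + int n\<bar>"
proof -
  obtain t where t: "z = int n * t" using assms by blast
  have "2 * z + int n = int n * (2 * t + 1)" using t by (simp add: algebra_simps)
  moreover have "1 \<le> \<bar>2 * t + 1\<bar>" by arith
  ultimately show ?thesis by (simp add: abs_mult mult_le_cancel_left1)
qed

text \<open>The partial sums at i and m - i add up to an odd multiple of n (up to the dip of u^(1))
  and differ by about 2i - m.\<close>

lemma twice_cost_u0_ge:
  assumes "even (int m - int n)" and "int n dvd c"
  shows "(\<Sum>i\<le>m. max (int n) \<bar>2 * int i - int m\<bar>) \<le> 2 * cost m (u0 n m) c"
  unfolding twice_cost_eq_sum_pairs
proof (rule sum_mono)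
  define q where "q = (int m - int n) div 2"
  define a where "a = (- q) mod int n"
  have m: "int m = int n + 2 * q" using assms(1) unfolding q_def by auto
  have dz: "int n dvd a + q - c" using dvd_mod_uminus_add[of n q] assms(2) unfolding a_def by simp
  fix i assume i: "i \<in> {..m}"
  define x where "x = psum (u0 n m) i - c"
  define y where "y = psum (u0 n m) (m - i) - c"
  have "x = a + int i - c" "y = a + int m - int i - c"
    using psum_u0[of i m n] psum_u0[of "m - i" m n] i unfolding x_def y_def a_def q_def by auto
  then have "x + y = 2 * (a + q - c) + int n" "x - y = 2 * int i - int m" using m by simp_all
  then show "max (int n) \<bar>2 * int i - int m\<bar> \<le> \<bar>x\<bar> + \<bar>y\<bar>"
    using abs_odd_multiple_ge[OF dz] abs_triangle_ineq[of x y] abs_triangle_ineq4[of x y] by auto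
qed

lemma sum_indicator_double_eq_le_1:
  fixes m :: nat
  shows "(\<Sum>i\<le>m. (if 2 * i = m then 1 else 0 :: int)) \<le> 1"
proof -
  have "(\<Sum>i\<le>m. (if 2 * i = m then 1 else 0 :: int)) = (\<Sum>i\<in>{i\<in>{..m}. 2 * i = m}. 1)"
    using sum.inter_filter[of "{..m}" "\<lambda>_. 1::int" "\<lambda>i. 2 * i = m"] by simp
  also have "\<dots> = int (card {i\<in>{..m}. 2 * i = m})" by simp
  also have "card {i\<in>{..m}. 2 * i = m} \<le> card {m div 2}"
    by (rule card_mono) auto
  finally show ?thesis by simp
qed

lemma twice_cost_u1_ge:
  assumes "odd (int m - int n)" and "int n dvd c"
  shows "(\<Sum>i\<le>m. max (int n) (\<bar>2 * int i - int m\<bar> - 1)) \<le> 2 * cost m (u1 n m) c + 1"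
proof -
  define q where "q = (int m - int n) div 2"
  define a where "a = (- q) mod int n"
  have m: "int m = int n + 2 * q + 1" using assms(1) unfolding q_def by presburger
  have dz: "int n dvd a + q - c" using dvd_mod_uminus_add[of n q] assms(2) unfolding a_def by simp
  have "(\<Sum>i\<le>m. max (int n) (\<bar>2 * int i - int m\<bar> - 1)) \<le>
     (\<Sum>i\<le>m. \<bar>psum (u1 n m) i - c\<bar> + \<bar>psum (u1 n m) (m - i) - c\<bar> + (if 2 * i = m then 1 else 0))"
  proof (rule sum_mono)
    fix i assume i: "i \<in> {..m}"
    define x where "x = psum (u1 n m) i - c"
    define y where "y = psum (u1 n m) (m - i) - c"
    define s1 where "s1 = (if (m + 2) div 2 \<le> i then 1 else 0 :: int)"
    define s2 where "s2 = (if (m + 2) div 2 \<le> m - i then 1 else 0 :: int)"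
    have x: "x = a + int i - s1 - c" and y: "y = a + int m - int i - s2 - c"
      using psum_u1[of i m n] psum_u1[of "m - i" m n] i
      unfolding x_def y_def a_def q_def s1_def s2_def by auto
    show "max (int n) (\<bar>2 * int i - int m\<bar> - 1) \<le> \<bar>x\<bar> + \<bar>y\<bar> + (if 2 * i = m then 1 else 0)"
    proof (cases "2 * i = m")
      case True
      then have "s1 = 0" "s2 = 0" unfolding s1_def s2_def by auto
      then have "\<bar>x + y\<bar> \<ge> int n - 1" using x y m abs_odd_multiple_ge[OF dz] by simp
      then show ?thesis using True abs_triangle_ineq[of x y] by auto
    next
      case False
      then have s12: "s1 + s2 = 1" using i unfolding s1_def s2_def by auto
      then have "\<bar>x + y\<bar> \<ge> int n" using x y m abs_odd_multiple_ge[OF dz] by simp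
      moreover have "\<bar>x - y\<bar> \<ge> \<bar>2 * int i - int m\<bar> - 1"
        using x y s12 unfolding s1_def s2_def by (auto split: if_splits)
      ultimately show ?thesis using abs_triangle_ineq[of x y] abs_triangle_ineq4[of x y] by auto
    qed
  qed
  also have "\<dots> \<le> 2 * cost m (u1 n m) c + 1"
    using sum_indicator_double_eq_le_1[of m] by (simp add: twice_cost_eq_sum_pairs sum.distrib)
  finally show ?thesis .
qed

theorem lemma5p30:
  fixes n m :: nat and v :: "nat \<Rightarrow> int"
  assumes "1 < n" and "n \<le> m"
    and "Zvert n m v"
    and "hpiv n m v \<ge> h_nm n m"
    and "(\<Sum>i\<in>I_c n m v. v (nat i)) = 0"
  shows "Zdist n m v Zzero \<le> D_nm n m"
proof -
  obtain b where b: "int n dvd b" and vb: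
    "2 * cost m v b \<le> (\<Sum>i\<le>m. max (int n) (\<bar>2 * int i - int m\<bar> - of_bool (odd (int m - int n))))"
    using twice_cost_le_if_high_pivots[OF assms(1-4)] .
  show ?thesis
  proof (cases "even (int m - int n)")
    case True
    have "Zdist n m v Zzero \<le> Zdist n m (u0 n m) Zzero"
      using vb twice_cost_u0_ge[OF True] True
      by (intro Zdist_Zzero_le_if_cost_le[OF assms(1,3) b]) fastforce
    then show ?thesis using True by (simp add: D_nm_def)
  next
    case False
    have "Zdist n m v Zzero \<le> Zdist n m (u1 n m) Zzero"
      using vb twice_cost_u1_ge[OF False] False
      by (intro Zdist_Zzero_le_if_cost_le[OF assms(1,3) b]) fastforce
    then show ?thesis using False by (simp add: D_nm_def le_max_iff_disj)
  qed
qed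

end
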